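(* Assume $\chi=\chi_1\chi_2^{-1}$ is weakly generic. Let $\sigma=\sigma_{a,b}\in W^{\exp}(\chi_1\oplus\chi_2)$ be such that $\mathcal{S}(\chi_1,\chi_2,\sigma)$ is non-empty, and let $(J,x)$ be its unique maximal element. Define $c_\tau=n_\tau+e-1-2x_\tau$ for $\tau\in\Sigma$ (so $c_\tau\in[1,p-1]$) and $r=r(J,c)$. Then $a_\tau-b_\tau+1=r_\tau$ for all $\tau$, except in the following two cases: (i) $J=\Sigma$, $n_\tau=e$ and $x_\tau=e-1$ for all $\tau$; (ii) $J=\varnothing$, $n_\tau=p-1-e$ and $x_\tau=0$ for all $\tau$. In cases (i) and (ii) there is the additional possibility that $a_\tau-b_\tau+1=p$ for all $\tau$ (and otherwise $a_\tau-b_\tau+1=r_\tau$ for all $\tau$). Furthermore, $r(J,c)$ is independent of the choice of $\tau_0$ in its definition.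
   Context: Let $p$ be a prime and $K/\mathbf{Q}_p$ finite with residue field $k$, residue degree $f$ and ramification index $e$; $I_K$ is the inertia subgroup of $G_K$. Fix a uniformiser $\pi$ and $\varpi\in\overline{K}$ with $\varpi^{p^f-1}=\pi$; $\omega\colon G_K\to k^\times$ sends $g$ to the reduction of $g(\varpi)/\varpi$. Let $\Sigma=\mathrm{Hom}_{\mathbf{F}_p}(k,\overline{\mathbf{F}}_p)$, $\varphi(x)=x^p$ on $k$, $\omega_\tau=\tau\circ\omega$. For $a\in\mathbf{Z}^\Sigma$, $\Omega_{\tau,a}=\sum_{i=0}^{f-1}p^ia_{\tau\circ\varphi^i}$. $\chi_1,\chi_2\colon G_K\to\overline{\mathbf{F}}_p^\times$ are continuous characters, $\chi=\chi_1\chi_2^{-1}=\psi\prod_\tau\omega_\tau^{n_\tau}$ with $\psi$ unramified, $n_\tau\in[1,p]$, some $n_\tau<p$ (this determines $n$). Weakly generic: $n_\tau\in[e,p-e]$ for all $\tau$. Serre weight $\sigma_{a,b}=\bigotimes_\tau(\det^{b_\tau}\otimes\mathrm{Sym}^{a_\tau-b_\tau}k^2)\otimes_{k,\tau}\overline{\mathbf{F}}_p$ for $a,b\in\mathbf{Z}^\Sigma$ with $a_\tau-b_\tau\in[0,p-1]$; $\sigma_{a,b}\cong\sigma_{a',b'}$ iff $a-b=a'-b'$ and $\Omega_{\tau,b}\equiv\Omega_{\tau,b'}\pmod{p^f-1}$. $W^{\exp}(\chi_1\oplus\chi_2)$: $\sigma_{a,b}$ belongs to it iff there exist $J\subseteq\Sigma$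 and $x_\tau\in[0,e-1]$ with $(\chi_1\oplus\chi_2)|_{I_K}\cong\prod_{\tau\in J}\omega_\tau^{a_\tau+1+x_\tau}\prod_{\tau\notin J}\omega_\tau^{b_\tau+x_\tau}\oplus\prod_{\tau\notin J}\omega_\tau^{a_\tau+e-x_\tau}\prod_{\tau\in J}\omega_\tau^{b_\tau+e-1-x_\tau}$. $\mathcal{S}(\chi_1,\chi_2,\sigma)$: pairs $(J,x)$, $J\subseteq\Sigma$, $x_\tau\in[0,e-1]$, with $\chi_1|_{I_K}=\prod_{\tau\in J}\omega_\tau^{a_\tau+1+x_\tau}\prod_{\tau\notin J}\omega_\tau^{b_\tau+x_\tau}$ and $\chi_2|_{I_K}=\prod_{\tau\notin J}\omega_\tau^{a_\tau+e-x_\tau}\prod_{\tau\in J}\omega_\tau^{b_\tau+e-1-x_\tau}$. With $s(J,x)_\tau=a_\tau-b_\tau+1+x_\tau$ ($\tau\in J$), $=x_\tau$ ($\tau\notin J$), order by $(J,x)\preceq(J',x')$ iff $\Omega_{\tau,s(J',x')-s(J,x)}\in(p^f-1)\mathbf{Z}_{\ge0}$ for all $\tau$; a non-empty $\mathcal{S}$ has a unique maximal element. $\delta_J$ and $r(J,c)$: for $(x,\tau)\in\mathbf{Z}^\Sigma\times\Sigma$, $y=\delta_J(x,\tau)$ equals $x$ if $1\le x_\tau\le p$; if $x_\tau\le0$ (resp. $x_\tau>p$) then $y_\tau=x_\tau+p$ (resp. $x_\tau-p$), $y_{\tau\circ\varphi}=x_{\tau\circ\varphi}-1$ if $\tau\circ\varphi\notin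 J$ and $x_{\tau\circ\varphi}+1$ if $\tau\circ\varphi\in J$, other entries unchanged. For $c_\tau\in[1,p-1]$ let $y_{0,\tau}=c_\tau$, $c_\tau+1$, $p-c_\tau$, $p-1-c_\tau$ according as ($\tau\in J,\tau\circ\varphi^{-1}\in J$), ($\tau\in J,\tau\circ\varphi^{-1}\notin J$), ($\tau\notin J,\tau\circ\varphi^{-1}\in J$), ($\tau\notin J,\tau\circ\varphi^{-1}\notin J$). If all $y_{0,\tau}>0$, $r(J,c)=y_0$; otherwise choose $\tau_0$ with $y_{0,\tau_0}=0$, put $y_\kappa=\delta_J(y_{\kappa-1},\tau_0\circ\varphi^{\kappa-1})$ for $\kappa=1,\dots,f$, and $r(J,c)=y_f$. *)

theory Defs
  imports "HOL-Number_Theory.Cong"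
begin

(* Conventions: Sigma = Hom(k, Fpbar) is indexed by {0..<f} via i |-> tau_0 o phi^i for a
   fixed embedding tau_0.  Thus tau o phi has index (i+1) mod f and tau o phi^{-1} has index
   (i+f-1) mod f.  Vectors in Z^Sigma are functions nat => int (only values on {0..<f} matter).
   Restrictions of the characters to inertia are recorded by exponents k1, k2 with
   chi_j|_{I_K} = omega_{tau_0}^{k_j}; since omega_{tau_0 o phi^i} = omega_{tau_0}^(p^i) and
   omega_{tau_0}|_{I_K} has order p^f-1, prod_tau omega_tau^(m_tau) = omega_{tau_0}^(Omega_{tau_0,m})
   and equalities of such characters are congruences mod p^f - 1. *)

definition Omega :: "int \<Rightarrow> nat \<Rightarrow> (nat \<Rightarrow> int) \<Rightarrow> nat \<Rightarrow> int" where
  "Omega p f m j = (\<Sum>i<f. p ^ i * m ((j + i) mod f))"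

definition expA :: "int \<Rightarrow> nat \<Rightarrow> nat set \<Rightarrow> (nat \<Rightarrow> int) \<Rightarrow> (nat \<Rightarrow> int) \<Rightarrow> (nat \<Rightarrow> int) \<Rightarrow> int" where
  "expA p f J x a b = Omega p f (\<lambda>i. if i \<in> J then a i + 1 + x i else b i + x i) 0"

definition expB :: "int \<Rightarrow> nat \<Rightarrow> nat \<Rightarrow> nat set \<Rightarrow> (nat \<Rightarrow> int) \<Rightarrow> (nat \<Rightarrow> int) \<Rightarrow> (nat \<Rightarrow> int) \<Rightarrow> int" where
  "expB p f e J x a b = Omega p f (\<lambda>i. if i \<notin> J then a i + int e - x i else b i + int e - 1 - x i) 0"

definition x_ok :: "nat \<Rightarrow> nat \<Rightarrow> (nat \<Rightarrow> int) \<Rightarrow> bool" where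
  "x_ok e f x \<longleftrightarrow> (\<forall>i<f. 0 \<le> x i \<and> x i \<le> int e - 1) \<and> (\<forall>i\<ge>f. x i = 0)"

(* sigma_{a,b} \<in> W^exp(chi_1 \<oplus> chi_2): isomorphism of semisimple 2-dim reps of I_K
   = equality of the multisets of characters *)
definition in_Wexp :: "int \<Rightarrow> nat \<Rightarrow> nat \<Rightarrow> int \<Rightarrow> int \<Rightarrow> (nat \<Rightarrow> int) \<Rightarrow> (nat \<Rightarrow> int) \<Rightarrow> bool" where
  "in_Wexp p f e k1 k2 a b \<longleftrightarrow>
     (\<exists>J x. J \<subseteq> {..<f} \<and> x_ok e f x \<and>
        (([k1 = expA p f J x a b] (mod p ^ f - 1) \<and> [k2 = expB p f e J x a b] (mod p ^ f - 1)) \<or>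
         ([k1 = expB p f e J x a b] (mod p ^ f - 1) \<and> [k2 = expA p f J x a b] (mod p ^ f - 1))))"

definition S_set :: "int \<Rightarrow> nat \<Rightarrow> nat \<Rightarrow> int \<Rightarrow> int \<Rightarrow> (nat \<Rightarrow> int) \<Rightarrow> (nat \<Rightarrow> int)
                     \<Rightarrow> (nat set \<times> (nat \<Rightarrow> int)) set" where
  "S_set p f e k1 k2 a b =
     {(J, x). J \<subseteq> {..<f} \<and> x_ok e f x \<and>
        [k1 = expA p f J x a b] (mod p ^ f - 1) \<and> [k2 = expB p f e J x a b] (mod p ^ f - 1)}"

definition s_vec :: "(nat \<Rightarrow> int) \<Rightarrow> (nat \<Rightarrow> int) \<Rightarrow> nat set \<Rightarrow> (nat \<Rightarrow> int) \<Rightarrow> nat \<Rightarrow> int" where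
  "s_vec a b J x i = (if i \<in> J then a i - b i + 1 + x i else x i)"

definition preceq :: "int \<Rightarrow> nat \<Rightarrow> (nat \<Rightarrow> int) \<Rightarrow> (nat \<Rightarrow> int)
                      \<Rightarrow> nat set \<times> (nat \<Rightarrow> int) \<Rightarrow> nat set \<times> (nat \<Rightarrow> int) \<Rightarrow> bool" where
  "preceq p f a b Jx Jx' \<longleftrightarrow>
     (\<forall>j<f. let d = Omega p f (\<lambda>i. s_vec a b (fst Jx') (snd Jx') i - s_vec a b (fst Jx) (snd Jx) i) j
            in 0 \<le> d \<and> (p ^ f - 1) dvd d)"

definition delta :: "int \<Rightarrow> nat \<Rightarrow> nat set \<Rightarrow> (nat \<Rightarrow> int) \<Rightarrow> nat \<Rightarrow> (nat \<Rightarrow> int)" where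
  "delta p f J y t =
     (if 1 \<le> y t \<and> y t \<le> p then y
      else let t' = Suc t mod f;
               y1 = y(t := (if y t \<le> 0 then y t + p else y t - p))
           in y1(t' := (if t' \<in> J then y1 t' + 1 else y1 t' - 1)))"

definition y0 :: "int \<Rightarrow> nat \<Rightarrow> nat set \<Rightarrow> (nat \<Rightarrow> int) \<Rightarrow> nat \<Rightarrow> int" where
  "y0 p f J c i =
     (let im = (i + f - 1) mod f in
      if i \<in> J then (if im \<in> J then c i else c i + 1)
      else (if im \<in> J then p - c i else p - 1 - c i))"

primrec r_steps :: "int \<Rightarrow> nat \<Rightarrow> nat set \<Rightarrow> (nat \<Rightarrow> int) \<Rightarrow> nat \<Rightarrow> nat \<Rightarrow> (nat \<Rightarrow> int)" where
  "r_steps p f J c t0 0 = y0 p f J c"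
| "r_steps p f J c t0 (Suc k) = delta p f J (r_steps p f J c t0 k) ((t0 + k) mod f)"

definition r_fun :: "int \<Rightarrow> nat \<Rightarrow> nat set \<Rightarrow> (nat \<Rightarrow> int) \<Rightarrow> (nat \<Rightarrow> int)" where
  "r_fun p f J c =
     (if \<forall>i<f. 0 < y0 p f J c i then y0 p f J c
      else r_steps p f J c (SOME t0. t0 < f \<and> y0 p f J c t0 = 0) f)"

end

theory Submission
  imports Defs
begin

(* Write R i = a i - b i + 1 and let eps i be 1 on J and -1 off J.  Comparing the two
   descriptions of the inertial characters coming from (J, x) in S shows that
   Omega (eps R - c) vanishes modulo p^f - 1, so eps R - c is the cyclic boundary
   p k i - k (i - 1) of an integer carry vector k.  The vector y0 is the boundary of
   k0 = base_carry J (0 on J, -1 off J), and the bounds 1 <= R <= p, 1 <= c <= p - 1 confine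
   k to the band k0 - 1 <= k <= k0, except that k > k0 somewhere forces case (i), and
   k < k0 - 1 somewhere forces p = 2 and J = {}, contradicting maximality.  Inside the band
   every step of the recursion r(J, c) from a zero of y0 performs exactly one of the carries
   k0 - k, so after f steps it reaches R whatever the starting point.  If y0 has no zero,
   either k = k0 and R = y0, or k = k0 - 1, which gives case (ii) or a pair in S strictly
   above (J, x). *)

definition cyc_pred :: "nat \<Rightarrow> nat \<Rightarrow> nat" where
  "cyc_pred f i = (i + f - 1) mod f"

definition cyc_succ :: "nat \<Rightarrow> nat \<Rightarrow> nat" where
  "cyc_succ f i = Suc i mod f"

lemma cyc_pred_less: "0 < f \<Longrightarrow> cyc_pred f i < f"
  by (simp add: cyc_pred_def)

lemma cyc_succ_less: "0 < f \<Longrightarrow> cyc_succ f i < f"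
  by (simp add: cyc_succ_def)

lemma cyc_succ_pred: "i < f \<Longrightarrow> cyc_succ f (cyc_pred f i) = i"
proof -
  assume "i < f"
  then have "Suc (i + f - 1) = i + f" by simp
  then show ?thesis
    using \<open>i < f\<close> by (simp add: cyc_pred_def cyc_succ_def mod_Suc_eq)
qed

lemma cyc_pred_succ: "i < f \<Longrightarrow> cyc_pred f (cyc_succ f i) = i"
proof (cases "Suc i < f")
  case True
  then show ?thesis by (simp add: cyc_pred_def cyc_succ_def)
next
  case False
  moreover assume "i < f"
  ultimately have "Suc i = f" by simp
  then show ?thesis by (simp add: cyc_pred_def cyc_succ_def)
qed

lemma cyc_pred_eq_iff: "j < f \<Longrightarrow> t < f \<Longrightarrow> cyc_pred f j = t \<longleftrightarrow> j = cyc_succ f t"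
  using cyc_succ_pred cyc_pred_succ by metis

lemma cyc_succ_add: "cyc_succ f ((t + m) mod f) = (t + Suc m) mod f"
  by (simp add: cyc_succ_def mod_Suc_eq)

lemma cyc_pred_add: "0 < f \<Longrightarrow> cyc_pred f ((t + Suc m) mod f) = (t + m) mod f"
  using cyc_pred_succ[of "(t + m) mod f" f] by (simp add: cyc_succ_add)

lemma cyc_pred_mod_add: "0 < f \<Longrightarrow> cyc_pred f ((j + i) mod f) = (cyc_pred f j + i) mod f"
proof -
  assume "0 < f"
  then have "cyc_pred f ((j + i) mod f) = ((j + i) mod f + (f - 1)) mod f"
    by (simp add: cyc_pred_def)
  also have "\<dots> = (j + i + (f - 1)) mod f"
    by (rule mod_add_left_eq)
  also have "\<dots> = ((j + (f - 1)) mod f + i) mod f"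
    using mod_add_left_eq[of "j + (f - 1)" f i] by (simp add: ac_simps)
  also have "\<dots> = (cyc_pred f j + i) mod f"
    using \<open>0 < f\<close> by (simp add: cyc_pred_def)
  finally show ?thesis .
qed

lemma add_mod_offset: "t < f \<Longrightarrow> i < f \<Longrightarrow> (t + (i + f - t) mod f) mod f = i" for t f i :: nat
proof -
  assume "t < f" "i < f"
  have "(t + (i + f - t) mod f) mod f = (t + (i + f - t)) mod f"
    by (rule mod_add_right_eq)
  also have "t + (i + f - t) = i + f"
    using \<open>t < f\<close> by simp
  finally show ?thesis
    using \<open>i < f\<close> by simp
qed

lemma mod_offset_add: "t < f \<Longrightarrow> l < f \<Longrightarrow> ((t + l) mod f + f - t) mod f = l" for t f l :: nat
proof -
  assume "t < f" "l < f"
  have "((t + l) mod f + f - t) mod f = ((t + l) mod f + (f - t)) mod f"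
    using diff_add_assoc[of t f "(t + l) mod f"] \<open>t < f\<close> by simp
  also have "\<dots> = (t + l + (f - t)) mod f"
    by (simp add: mod_add_left_eq)
  also have "t + l + (f - t) = l + f"
    using \<open>t < f\<close> by simp
  finally show ?thesis
    using \<open>l < f\<close> by simp
qed

lemma cyclic_induct_succ:
  assumes "i0 < f" and "P i0" and step: "\<And>i. i < f \<Longrightarrow> P i \<Longrightarrow> P (cyc_succ f i)"
  shows "\<forall>i<f. P i"
proof -
  have reach: "P ((i0 + m) mod f)" for m
  proof (induction m)
    case 0
    then show ?case using assms(1,2) by simp
  next
    case (Suc m)
    then show ?case
      using step[of "(i0 + m) mod f"] assms(1) by (simp add: cyc_succ_add)
  qed
  have "(i0 + (i + f - i0)) mod f = i" if "i < f" for i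
    using assms(1) that by simp
  then show ?thesis using reach by metis
qed

lemma cyclic_induct_pred:
  assumes "i0 < f" and "P i0" and step: "\<And>i. i < f \<Longrightarrow> P i \<Longrightarrow> P (cyc_pred f i)"
  shows "\<forall>i<f. P i"
proof (rule ccontr)
  assume "\<not> (\<forall>i<f. P i)"
  then obtain i1 where "i1 < f" "\<not> P i1" by blast
  then have "\<forall>i<f. \<not> P i"
  proof (rule cyclic_induct_succ)
    fix i assume "i < f" "\<not> P i"
    then show "\<not> P (cyc_succ f i)"
      using step[of "cyc_succ f i"] cyc_pred_succ cyc_succ_less by fastforce
  qed
  then show False using assms(1,2) by blast
qed

lemma ex_argmax_lessThan:
  fixes g :: "nat \<Rightarrow> 'a::linorder"
  assumes "0 < f"
  obtains i0 where "i0 < f" and "\<And>j. j < f \<Longrightarrow> g j \<le> g i0"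
proof -
  have "Max (g ` {..<f}) \<in> g ` {..<f}"
    using assms by (intro Max_in) auto
  then obtain i0 where "i0 < f" "g i0 = Max (g ` {..<f})" by auto
  then show ?thesis using that[of i0] by simp
qed

lemma ex_argmin_lessThan:
  fixes g :: "nat \<Rightarrow> 'a::linorder"
  assumes "0 < f"
  obtains i0 where "i0 < f" and "\<And>j. j < f \<Longrightarrow> g i0 \<le> g j"
proof -
  have "Min (g ` {..<f}) \<in> g ` {..<f}"
    using assms by (intro Min_in) auto
  then obtain i0 where "i0 < f" "g i0 = Min (g ` {..<f})" by auto
  then show ?thesis using that[of i0] by simp
qed

section \<open>Carry decompositions\<close>

lemma Omega_cong: "(\<And>i. i < f \<Longrightarrow> g i = h i) \<Longrightarrow> Omega p f g j = Omega p f h j"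
  unfolding Omega_def by (intro sum.cong) auto

lemma Omega_diff: "Omega p f (\<lambda>i. g i - h i) j = Omega p f g j - Omega p f h j"
  unfolding Omega_def by (simp add: sum_subtractf algebra_simps)

lemma Omega_smult: "Omega p f (\<lambda>i. v * g i) j = v * Omega p f g j"
  unfolding Omega_def by (simp add: sum_distrib_left algebra_simps)

lemma Omega_cyc_pred: "0 < f \<Longrightarrow> Omega p f (\<lambda>i. g (cyc_pred f i)) j = Omega p f g (cyc_pred f j)"
  unfolding Omega_def by (simp add: cyc_pred_mod_add)

lemma Omega_cyc_succ:
  assumes "j < f"
  shows "p * Omega p f g (cyc_succ f j) = Omega p f g j + (p ^ f - 1) * g j"
proof -
  define F where "F i = p ^ i * g ((j + i) mod f)" for i
  have "Omega p f g (cyc_succ f j) = (\<Sum>i<f. p ^ i * g ((Suc j + i) mod f))"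
    unfolding Omega_def cyc_succ_def by (simp add: mod_add_left_eq)
  then have "p * Omega p f g (cyc_succ f j) = (\<Sum>i<f. F (Suc i))"
    unfolding F_def by (simp add: sum_distrib_left algebra_simps)
  also have "\<dots> = (\<Sum>i<Suc f. F i) - F 0"
    using sum.lessThan_Suc_shift[of F f] by simp
  also have "(\<Sum>i<Suc f. F i) = Omega p f g j + p ^ f * g j"
    using assms by (simp add: F_def Omega_def)
  also have "F 0 = g j"
    using assms by (simp add: F_def)
  finally show ?thesis by (simp add: algebra_simps)
qed

lemma Omega_carry:
  assumes "0 < f" and "j < f"
  shows "Omega p f (\<lambda>i. p * E i - E (cyc_pred f i)) j = (p ^ f - 1) * E (cyc_pred f j)"
  using Omega_cyc_succ[of "cyc_pred f j" f p E] assms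
  by (simp add: Omega_diff Omega_smult Omega_cyc_pred cyc_pred_less cyc_succ_pred)

lemma pow_minus_one_pos: "2 \<le> (p::int) \<Longrightarrow> 0 < f \<Longrightarrow> 0 < p ^ f - 1"
  using power_increasing[of 1 f p] by simp

lemma Omega_dvd_rotate:
  assumes "0 < f" and "(p ^ f - 1) dvd Omega p f u 0" and "j < f"
  shows "(p ^ f - 1) dvd Omega p f u j"
  using \<open>j < f\<close>
proof (induction j)
  case 0
  then show ?case using assms(2) by simp
next
  case (Suc j)
  have "coprime (p ^ f - 1) p"
    using \<open>0 < f\<close> coprime_power_left_iff[of p f "p ^ f - 1"] by (simp add: ac_simps)
  moreover have "(p ^ f - 1) dvd p * Omega p f u (Suc j)"
    using Omega_cyc_succ[of j f p u] Suc by (simp add: cyc_succ_def)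
  ultimately show ?case
    using coprime_dvd_mult_right_iff by blast
qed

text \<open>The carry is \<open>k i = Omega u (i + 1) / (p^f - 1)\<close>.\<close>

lemma carry_decomposition:
  assumes "2 \<le> p" and "0 < f" and "(p ^ f - 1) dvd Omega p f u 0"
  obtains k where "\<And>i. i < f \<Longrightarrow> u i = p * k i - k (cyc_pred f i)"
proof
  let ?M = "p ^ f - 1"
  define k where "k i = Omega p f u (cyc_succ f i) div ?M" for i
  have M_k: "?M * k i = Omega p f u (cyc_succ f i)" for i
    using Omega_dvd_rotate[OF assms(2,3)] cyc_succ_less[OF assms(2)] by (simp add: k_def)
  fix i assume "i < f"
  have "?M * (p * k i) = ?M * (k (cyc_pred f i) + u i)"
    using M_k[of i] M_k[of "cyc_pred f i"] Omega_cyc_succ[OF \<open>i < f\<close>, of p u]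
    by (simp add: cyc_succ_pred[OF \<open>i < f\<close>] algebra_simps)
  then show "u i = p * k i - k (cyc_pred f i)"
    using pow_minus_one_pos[OF assms(1,2)] by simp
qed

definition jsign :: "nat set \<Rightarrow> nat \<Rightarrow> int" where
  "jsign J i = (if i \<in> J then 1 else -1)"

definition base_carry :: "nat set \<Rightarrow> nat \<Rightarrow> int" where
  "base_carry J i = (if i \<in> J then 0 else -1)"

definition carry_vec ::
    "int \<Rightarrow> nat \<Rightarrow> nat set \<Rightarrow> (nat \<Rightarrow> int) \<Rightarrow> (nat \<Rightarrow> int) \<Rightarrow> nat \<Rightarrow> int" where
  "carry_vec p f J c k i = jsign J i * (c i + p * k i - k (cyc_pred f i))"

lemma jsign_mult_eq_iff: "jsign J i * u = v \<longleftrightarrow> u = jsign J i * v"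
  by (auto simp: jsign_def)

lemma y0_eq_carry_vec: "i < f \<Longrightarrow> y0 p f J c i = carry_vec p f J c (base_carry J) i"
  unfolding y0_def Let_def carry_vec_def jsign_def base_carry_def cyc_pred_def by auto

lemma y0_range: "1 \<le> c i \<Longrightarrow> c i \<le> p - 1 \<Longrightarrow> 0 \<le> y0 p f J c i \<and> y0 p f J c i \<le> p"
  unfolding y0_def Let_def by auto

lemma y0_eq_0:
  "y0 p f J c t = 0 \<Longrightarrow> 1 \<le> c t \<Longrightarrow> c t \<le> p - 1
    \<Longrightarrow> t \<notin> J \<and> cyc_pred f t \<notin> J \<and> c t = p - 1"
  unfolding y0_def Let_def cyc_pred_def by (auto split: if_splits)

lemma carry_vec_decrement:
  "carry_vec p f J c (K(t := K t - 1)) j = carry_vec p f J c K j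
     - (if j = t then jsign J j * p else 0) + (if cyc_pred f j = t then jsign J j else 0)"
  unfolding carry_vec_def by (cases "j = t"; cases "cyc_pred f j = t") (simp_all add: algebra_simps)

lemma delta_in_range: "1 \<le> y t \<and> y t \<le> p \<Longrightarrow> delta p f J y t = y"
  by (simp add: delta_def)

lemma delta_carry_vec:
  assumes "t < f" and "j < f" and y: "\<And>j. j < f \<Longrightarrow> y j = carry_vec p f J c K j"
    and "\<not> (1 \<le> y t \<and> y t \<le> p)" and "y t \<le> 0 \<longleftrightarrow> t \<notin> J"
  shows "delta p f J y t j = carry_vec p f J c (K(t := K t - 1)) j"
proof -
  have "delta p f J y t j = y j - (if j = t then jsign J t * p else 0)
      + (if j = cyc_succ f t then jsign J (cyc_succ f t) else 0)"
    using assms(4,5) unfolding delta_def Let_def cyc_succ_def jsign_def by (auto split: if_splits)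
  then show ?thesis
    using y[OF \<open>j < f\<close>] cyc_pred_eq_iff[OF assms(2,1)] by (simp add: carry_vec_decrement)
qed

section \<open>The set S and its maximal element\<close>

lemma expA_diff_expB:
  "expA p f J x a b - expB p f e J x a b - Omega p f n 0
     = Omega p f (\<lambda>i. jsign J i * (a i - b i + 1) - (n i + int e - 1 - 2 * x i)) 0"
  unfolding expA_def expB_def Omega_diff[symmetric] by (rule Omega_cong) (auto simp: jsign_def)

lemma S_set_carry_vec:
  assumes "2 \<le> p" and "0 < f" and "(J, x) \<in> S_set p f e k1 k2 a b"
    and "[k1 - k2 = Omega p f n 0] (mod p ^ f - 1)"
  obtains k
  where "\<And>i. i < f \<Longrightarrow> a i - b i + 1 = carry_vec p f J (\<lambda>i. n i + int e - 1 - 2 * x i) k i"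
proof -
  define u where "u i = jsign J i * (a i - b i + 1) - (n i + int e - 1 - 2 * x i)" for i
  have "(p ^ f - 1) dvd k1 - k2 - Omega p f n 0" "(p ^ f - 1) dvd k1 - expA p f J x a b"
    "(p ^ f - 1) dvd k2 - expB p f e J x a b"
    using assms(3,4) by (auto simp: S_set_def cong_iff_dvd_diff)
  then have "(p ^ f - 1) dvd
      (k1 - k2 - Omega p f n 0) - (k1 - expA p f J x a b) + (k2 - expB p f e J x a b)"
    by (metis dvd_add dvd_diff)
  moreover have
    "(k1 - k2 - Omega p f n 0) - (k1 - expA p f J x a b) + (k2 - expB p f e J x a b)
      = Omega p f u 0"
    using expA_diff_expB[of p f J x a b e n] unfolding u_def by simp
  ultimately have "(p ^ f - 1) dvd Omega p f u 0"
    by simp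
  then obtain k where k: "\<And>i. i < f \<Longrightarrow> u i = p * k i - k (cyc_pred f i)"
    using carry_decomposition assms(1,2) by blast
  show ?thesis
  proof (rule that)
    fix i assume "i < f"
    then have "jsign J i * (a i - b i + 1) = n i + int e - 1 - 2 * x i + p * k i - k (cyc_pred f i)"
      using k by (simp add: u_def algebra_simps)
    then show "a i - b i + 1 = carry_vec p f J (\<lambda>i. n i + int e - 1 - 2 * x i) k i"
      by (simp add: carry_vec_def jsign_mult_eq_iff)
  qed
qed

lemma s_vec_shift_exp:
  assumes "0 < f"
    and "\<And>i. i < f \<Longrightarrow> s_vec a b J' x i - s_vec a b J x i = p * E i - E (cyc_pred f i)"
  shows "expA p f J' x a b = expA p f J x a b + (p ^ f - 1) * E (cyc_pred f 0)"
    and "expB p f e J' x a b = expB p f e J x a b - (p ^ f - 1) * E (cyc_pred f 0)"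
proof -
  let ?D = "Omega p f (\<lambda>i. s_vec a b J' x i - s_vec a b J x i) 0"
  have "?D = Omega p f (\<lambda>i. p * E i - E (cyc_pred f i)) 0"
    using assms(2) by (rule Omega_cong)
  also have "\<dots> = (p ^ f - 1) * E (cyc_pred f 0)"
    using Omega_carry[OF \<open>0 < f\<close> \<open>0 < f\<close>] .
  finally have "?D = (p ^ f - 1) * E (cyc_pred f 0)" .
  moreover have "expA p f J' x a b - expA p f J x a b = ?D"
    unfolding expA_def Omega_diff[symmetric] s_vec_def by (rule Omega_cong) auto
  moreover have "expB p f e J x a b - expB p f e J' x a b = ?D"
    unfolding expB_def Omega_diff[symmetric] s_vec_def by (rule Omega_cong) auto
  ultimately show "expA p f J' x a b = expA p f J x a b + (p ^ f - 1) * E (cyc_pred f 0)"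
    and "expB p f e J' x a b = expB p f e J x a b - (p ^ f - 1) * E (cyc_pred f 0)"
    by simp_all
qed

lemma S_set_shift:
  assumes "0 < f" and "(J, x) \<in> S_set p f e k1 k2 a b" and "J' \<subseteq> {..<f}"
    and shift: "\<And>i. i < f \<Longrightarrow> s_vec a b J' x i - s_vec a b J x i = p * E i - E (cyc_pred f i)"
  shows "(J', x) \<in> S_set p f e k1 k2 a b"
proof -
  let ?M = "p ^ f - 1" and ?d = "(p ^ f - 1) * E (cyc_pred f 0)"
  from assms(2) have "x_ok e f x" and
    dvd_A: "?M dvd k1 - expA p f J x a b" and dvd_B: "?M dvd k2 - expB p f e J x a b"
    by (auto simp: S_set_def cong_iff_dvd_diff)
  moreover have "k1 - expA p f J' x a b = (k1 - expA p f J x a b) - ?d"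
    and "k2 - expB p f e J' x a b = (k2 - expB p f e J x a b) + ?d"
    using s_vec_shift_exp[OF assms(1) shift] by simp_all
  then have "?M dvd k1 - expA p f J' x a b" and "?M dvd k2 - expB p f e J' x a b"
    using dvd_A dvd_B by (metis dvd_diff dvd_triv_left, metis dvd_add dvd_triv_left)
  ultimately show ?thesis
    using assms(3) by (auto simp: S_set_def cong_iff_dvd_diff)
qed

lemma preceq_shift:
  assumes "2 \<le> p" and "0 < f" and "\<And>i. i < f \<Longrightarrow> 0 \<le> E i"
    and shift: "\<And>i. i < f \<Longrightarrow> s_vec a b J' x i - s_vec a b J x i = p * E i - E (cyc_pred f i)"
  shows "preceq p f a b (J, x) (J', x)"
  unfolding preceq_def Let_def fst_conv snd_conv
proof (intro allI impI)
  fix j assume "j < f"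
  have "Omega p f (\<lambda>i. s_vec a b J' x i - s_vec a b J x i) j
      = Omega p f (\<lambda>i. p * E i - E (cyc_pred f i)) j"
    using shift by (rule Omega_cong)
  also have "\<dots> = (p ^ f - 1) * E (cyc_pred f j)"
    using Omega_carry[OF \<open>0 < f\<close> \<open>j < f\<close>] .
  finally show "0 \<le> Omega p f (\<lambda>i. s_vec a b J' x i - s_vec a b J x i) j
      \<and> (p ^ f - 1) dvd Omega p f (\<lambda>i. s_vec a b J' x i - s_vec a b J x i) j"
    using pow_minus_one_pos[OF assms(1,2)] assms(3)[OF cyc_pred_less[OF \<open>0 < f\<close>]] by simp
qed

lemma maximal_S_shift_eq:
  assumes "2 \<le> p" and "0 < f" and Jx_in: "(J, x) \<in> S_set p f e k1 k2 a b"
    and Jx_max: "\<forall>Jx' \<in> S_set p f e k1 k2 a b. preceq p f a b (J, x) Jx' \<longrightarrow> Jx' = (J, x)"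
    and "J' \<subseteq> {..<f}" and "\<And>i. i < f \<Longrightarrow> 0 \<le> E i"
    and shift: "\<And>i. i < f \<Longrightarrow> s_vec a b J' x i - s_vec a b J x i = p * E i - E (cyc_pred f i)"
  shows "J' = J"
  using Jx_max S_set_shift[OF assms(2) Jx_in assms(5) shift] preceq_shift[OF assms(1,2,6) shift]
  by blast

text \<open>Moving the boundary index \<open>j\<close> of \<open>J\<close> to its predecessor is a shift by the
  unit carry at \<open>cyc_pred f j\<close>.\<close>

lemma maximal_S_no_transfer:
  assumes "2 \<le> p" and "0 < f" and Jx_in: "(J, x) \<in> S_set p f e k1 k2 a b"
    and Jx_max: "\<forall>Jx' \<in> S_set p f e k1 k2 a b. preceq p f a b (J, x) Jx' \<longrightarrow> Jx' = (J, x)"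
    and "j \<in> J" and "cyc_pred f j \<notin> J"
    and "a j - b j + 1 = 1" and "a (cyc_pred f j) - b (cyc_pred f j) + 1 = p"
  shows False
proof -
  let ?pj = "cyc_pred f j"
  define E where "E i = (if i = ?pj then 1 else 0 :: int)" for i
  have "j < f" and "?pj < f" and "?pj \<noteq> j"
    using Jx_in assms(5,6) cyc_pred_less[OF \<open>0 < f\<close>] by (auto simp: S_set_def)
  have pred_eq: "cyc_pred f i = ?pj \<longleftrightarrow> i = j" if "i < f" for i
    using cyc_succ_pred that \<open>j < f\<close> by metis
  have "insert ?pj (J - {j}) = J"
  proof (rule maximal_S_shift_eq[OF assms(1,2) Jx_in Jx_max])
    show "insert ?pj (J - {j}) \<subseteq> {..<f}"
      using Jx_in \<open>?pj < f\<close> by (auto simp: S_set_def)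
    show "0 \<le> E i" for i
      by (simp add: E_def)
    show "s_vec a b (insert ?pj (J - {j})) x i - s_vec a b J x i = p * E i - E (cyc_pred f i)"
      if "i < f" for i
      using assms(5-8) \<open>?pj \<noteq> j\<close> pred_eq[OF that] by (auto simp: s_vec_def E_def)
  qed
  then show False
    using assms(6) by blast
qed

text \<open>For \<open>p = 2\<close>, putting every index into \<open>J\<close> is the shift by the constant carry 2.\<close>

lemma maximal_S_not_all_two:
  assumes "0 < f" and Jx_in: "(J, x) \<in> S_set p f e k1 k2 a b"
    and Jx_max: "\<forall>Jx' \<in> S_set p f e k1 k2 a b. preceq p f a b (J, x) Jx' \<longrightarrow> Jx' = (J, x)"
    and "p = 2" and "J = {}" and "\<And>i. i < f \<Longrightarrow> a i - b i + 1 = 2"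
  shows False
proof -
  have "{..<f} = J"
    by (rule maximal_S_shift_eq[where E = "\<lambda>_. 2", OF _ assms(1) Jx_in Jx_max])
      (use assms(4-6) in \<open>auto simp: s_vec_def\<close>)
  then show False
    using assms(1,5) by blast
qed

section \<open>Carry vectors representing R\<close>

locale carry_repr =
  fixes p :: int and f :: nat and J :: "nat set" and c R k :: "nat \<Rightarrow> int"
  assumes p_ge_2: "2 \<le> p" and f_pos: "0 < f" and J_sub: "J \<subseteq> {..<f}"
    and c_range: "\<And>i. i < f \<Longrightarrow> 1 \<le> c i \<and> c i \<le> p - 1"
    and R_range: "\<And>i. i < f \<Longrightarrow> 1 \<le> R i \<and> R i \<le> p"
    and R_carry: "\<And>i. i < f \<Longrightarrow> R i = carry_vec p f J c k i"
begin

lemma pred_less: "cyc_pred f i < f"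
  using cyc_pred_less[OF f_pos] .

lemma R_in: "i < f \<Longrightarrow> i \<in> J \<Longrightarrow> R i = c i + p * k i - k (cyc_pred f i)"
  using R_carry by (simp add: carry_vec_def jsign_def)

lemma R_out: "i < f \<Longrightarrow> i \<notin> J \<Longrightarrow> R i = k (cyc_pred f i) - c i - p * k i"
  using R_carry by (simp add: carry_vec_def jsign_def)

lemma carry_step_bounds:
  "i < f \<Longrightarrow> 1 - 2 * p \<le> p * k i - k (cyc_pred f i) \<and> p * k i - k (cyc_pred f i) \<le> p - 1"
  using R_in R_out c_range R_range by (cases "i \<in> J") force+

lemma carry_le_one: "i < f \<Longrightarrow> k i \<le> 1"
proof -
  obtain i0 where "i0 < f" and i0_max: "\<And>j. j < f \<Longrightarrow> k j \<le> k i0"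
    using ex_argmax_lessThan[OF f_pos, of k] by blast
  then have "p * k i0 - k i0 \<le> p - 1"
    using carry_step_bounds[OF \<open>i0 < f\<close>] i0_max[OF pred_less[of i0]] by linarith
  then have "(p - 1) * k i0 \<le> (p - 1) * 1"
    by (simp add: algebra_simps)
  then have "k i0 \<le> 1"
    by (rule mult_left_le_imp_le) (use p_ge_2 in simp)
  then show "i < f \<Longrightarrow> k i \<le> 1"
    using i0_max by fastforce
qed

lemma carry_neg_outside: "i < f \<Longrightarrow> i \<notin> J \<Longrightarrow> k i \<le> -1"
  using R_out R_range c_range carry_le_one[OF pred_less] p_ge_2
  by (smt (verit) mult_nonneg_nonneg)

lemma carry_above_base:
  assumes "i1 < f" and "base_carry J i1 < k i1"
  shows "J = {..<f} \<and> (\<forall>i<f. c i = 1 \<and> R i = p)"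
proof -
  have "\<forall>i<f. i \<in> J \<and> 1 \<le> k i"
  proof (rule cyclic_induct_pred[where P = "\<lambda>i. i \<in> J \<and> 1 \<le> k i", OF \<open>i1 < f\<close>])
    show "i1 \<in> J \<and> 1 \<le> k i1"
      using assms carry_neg_outside[OF \<open>i1 < f\<close>] by (auto simp: base_carry_def split: if_splits)
  next
    fix i assume "i < f" and "i \<in> J \<and> 1 \<le> k i"
    then have "p \<le> p * k i"
      using p_ge_2 by simp
    moreover have "R i \<le> p" and "1 \<le> c i"
      using R_range c_range \<open>i < f\<close> by auto
    ultimately have "1 \<le> k (cyc_pred f i)"
      using R_in \<open>i < f\<close> \<open>i \<in> J \<and> 1 \<le> k i\<close> by fastforce
    then show "cyc_pred f i \<in> J \<and> 1 \<le> k (cyc_pred f i)"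
      using carry_neg_outside[OF pred_less] by force
  qed
  then have k_1: "k i = 1" and in_J: "i \<in> J" if "i < f" for i
    using carry_le_one that by force+
  have "c i = 1 \<and> R i = p" if "i < f" for i
  proof -
    have "R i = c i + p - 1"
      using R_in[OF that in_J[OF that]] k_1[OF that] k_1[OF pred_less] by simp
    then show ?thesis
      using R_range[OF that] c_range[OF that] by linarith
  qed
  moreover have "J = {..<f}"
    using J_sub in_J by auto
  ultimately show ?thesis
    by blast
qed

lemma carry_below_band_everywhere:
  assumes "i1 < f" and "k i1 < base_carry J i1 - 1" and "i < f"
  shows "k i \<le> - p - 1"
proof -
  have below_pred: "k (cyc_pred f i) \<le> - p - 1" if "i < f" and "k i < base_carry J i - 1" for i
  proof (cases "i \<in> J")
    case True
    then have "p * k i \<le> p * (-2)"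
      using that p_ge_2 by (intro mult_left_mono) (auto simp: base_carry_def)
    then show ?thesis using R_in[OF \<open>i < f\<close> True] R_range c_range \<open>i < f\<close> by fastforce
  next
    case False
    then have "p * k i \<le> p * (-3)"
      using that p_ge_2 by (intro mult_left_mono) (auto simp: base_carry_def)
    then show ?thesis using R_out[OF \<open>i < f\<close> False] R_range c_range \<open>i < f\<close> by fastforce
  qed
  have "\<forall>i<f. k i < base_carry J i - 1"
  proof (rule cyclic_induct_pred[where P = "\<lambda>i. k i < base_carry J i - 1", OF assms(1,2)])
    fix i assume "i < f" "k i < base_carry J i - 1"
    then show "k (cyc_pred f i) < base_carry J (cyc_pred f i) - 1"
      using below_pred p_ge_2 by (fastforce simp: base_carry_def)
  qed
  then show ?thesis
    using below_pred[OF cyc_succ_less[OF f_pos]] cyc_succ_less[OF f_pos] cyc_pred_succ[OF assms(3)]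
    by metis
qed

lemma carry_below_band:
  assumes "i1 < f" and "k i1 < base_carry J i1 - 1"
  shows "p = 2 \<and> J = {} \<and> (\<forall>i<f. R i = 2)"
proof -
  note k_le = carry_below_band_everywhere[OF assms]
  obtain i2 where "i2 < f" and i2_min: "\<And>j. j < f \<Longrightarrow> k i2 \<le> k j"
    using ex_argmin_lessThan[OF f_pos, of k] by blast
  then have "1 - 2 * p \<le> p * k i2 - k i2"
    using carry_step_bounds[OF \<open>i2 < f\<close>] i2_min[OF pred_less[of i2]] by linarith
  then have low: "1 - 2 * p \<le> (p - 1) * k i2"
    by (simp add: algebra_simps)
  moreover have "(p - 1) * k i2 \<le> (p - 1) * (- p - 1)"
    using k_le[OF \<open>i2 < f\<close>] p_ge_2 by (intro mult_left_mono) auto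
  ultimately have "p * p \<le> 2 * p"
    by (simp add: algebra_simps)
  then have p2: "p = 2"
    using p_ge_2 mult_right_mono[of 3 p p] by fastforce
  then have k_3: "k i = -3" if "i < f" for i
    using low k_le[OF that] i2_min[OF that] by simp
  have "i \<notin> J" and "R i = 2" if "i < f" for i
  proof -
    show "i \<notin> J"
    proof
      assume "i \<in> J"
      then have "R i = c i - 3"
        using R_in[OF that] k_3[OF that] k_3[OF pred_less] p2 by simp
      then show False
        using R_range[OF that] c_range[OF that] p2 by linarith
    qed
    then have "R i = 3 - c i"
      using R_out[OF that] k_3[OF that] k_3[OF pred_less] p2 by simp
    then show "R i = 2"
      using R_range[OF that] c_range[OF that] p2 by linarith
  qed
  then show ?thesis
    using p2 J_sub by blast
qed

text \<open>After \<open>m\<close> steps from \<open>t0\<close> the recursion has performed the carries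
  \<open>base_carry J - k\<close> at the \<open>m\<close> indices visited so far.\<close>

definition partial_carry :: "nat \<Rightarrow> nat \<Rightarrow> nat \<Rightarrow> int" where
  "partial_carry t0 m i = (if i < f \<and> (i + f - t0) mod f < m then k i else base_carry J i)"

lemma partial_carry_0: "partial_carry t0 0 = base_carry J"
  by (simp add: partial_carry_def fun_eq_iff)

lemma partial_carry_visited:
  "t0 < f \<Longrightarrow> l < m \<Longrightarrow> l < f \<Longrightarrow> partial_carry t0 m ((t0 + l) mod f) = k ((t0 + l) mod f)"
  by (simp add: partial_carry_def mod_offset_add)

lemma partial_carry_unvisited:
  "t0 < f \<Longrightarrow> m < f \<Longrightarrow> partial_carry t0 m ((t0 + m) mod f) = base_carry J ((t0 + m) mod f)"
  by (simp add: partial_carry_def mod_offset_add)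

lemma partial_carry_Suc:
  assumes "t0 < f" and "m < f"
  shows "partial_carry t0 (Suc m) = (partial_carry t0 m)((t0 + m) mod f := k ((t0 + m) mod f))"
proof
  fix i
  have "(i + f - t0) mod f = m \<longleftrightarrow> i = (t0 + m) mod f" if "i < f"
    using add_mod_offset[OF assms(1) that] mod_offset_add[OF assms] by metis
  then show "partial_carry t0 (Suc m) i = ((partial_carry t0 m)((t0 + m) mod f := k ((t0 + m) mod f))) i"
    using assms by (auto simp: partial_carry_def less_Suc_eq)
qed

lemma carry_vec_partial_carry_f: "i < f \<Longrightarrow> carry_vec p f J c (partial_carry t0 f) i = R i"
  using R_carry pred_less by (simp add: carry_vec_def partial_carry_def)

lemma carry_ne_base_at_zero:
  assumes "t0 < f" and "y0 p f J c t0 = 0"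
  shows "k t0 \<noteq> base_carry J t0"
proof
  assume k_t0: "k t0 = base_carry J t0"
  have t0_out: "t0 \<notin> J" "cyc_pred f t0 \<notin> J" "c t0 = p - 1"
    using y0_eq_0[OF assms(2)] c_range[OF assms(1)] by auto
  then have "R t0 = 1 + k (cyc_pred f t0)"
    using R_out[OF assms(1)] k_t0 by (simp add: base_carry_def algebra_simps)
  then show False
    using R_range[OF assms(1)] carry_neg_outside[OF pred_less t0_out(2)] by simp
qed

lemma carry_vec_partial_carry_current:
  assumes "t0 < f" and "Suc l < f" and t: "t = (t0 + Suc l) mod f"
  shows "carry_vec p f J c (partial_carry t0 (Suc l)) t = R t + jsign J t * p * (base_carry J t - k t)"
proof -
  have "t < f"
    using f_pos by (simp add: t)
  have "cyc_pred f t = (t0 + l) mod f"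
    using cyc_pred_add[OF f_pos] by (simp add: t)
  then have "partial_carry t0 (Suc l) (cyc_pred f t) = k (cyc_pred f t)"
    using partial_carry_visited[OF assms(1), of l "Suc l"] assms(2) by simp
  moreover have "partial_carry t0 (Suc l) t = base_carry J t"
    using partial_carry_unvisited[OF assms(1,2)] by (simp add: t)
  ultimately show ?thesis
    using R_carry[OF \<open>t < f\<close>] by (simp add: carry_vec_def algebra_simps)
qed

lemma r_steps_Suc_partial_carry:
  assumes band: "\<And>i. i < f \<Longrightarrow> base_carry J i - 1 \<le> k i \<and> k i \<le> base_carry J i"
    and "t0 < f" and zero: "y0 p f J c t0 = 0" and "m < f"
    and y: "\<And>j. j < f \<Longrightarrow> r_steps p f J c t0 m j = carry_vec p f J c (partial_carry t0 m) j"
    and "j < f"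
  shows "r_steps p f J c t0 (Suc m) j = carry_vec p f J c (partial_carry t0 (Suc m)) j"
proof -
  define t where "t = (t0 + m) mod f"
  let ?y = "r_steps p f J c t0 m" and ?K = "partial_carry t0 m"
  have "t < f"
    using f_pos by (simp add: t_def)
  have step: "r_steps p f J c t0 (Suc m) = delta p f J ?y t"
    by (simp add: t_def)
  have K_t: "?K t = base_carry J t" and K_Suc: "partial_carry t0 (Suc m) = ?K(t := k t)"
    using partial_carry_unvisited[OF \<open>t0 < f\<close> \<open>m < f\<close>] partial_carry_Suc[OF \<open>t0 < f\<close> \<open>m < f\<close>]
    by (simp_all add: t_def)
  have y_t: "?y t = R t + jsign J t * p * (base_carry J t - k t)" if "m \<noteq> 0"
    using y[OF \<open>t < f\<close>] carry_vec_partial_carry_current[OF \<open>t0 < f\<close>, of "m - 1" t] that \<open>m < f\<close>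
    by (simp add: t_def)
  show ?thesis
  proof (cases "k t = base_carry J t")
    case True
    have "m \<noteq> 0"
    proof
      assume "m = 0"
      then have "t = t0"
        using \<open>t0 < f\<close> by (simp add: t_def)
      then show False
        using True carry_ne_base_at_zero[OF \<open>t0 < f\<close> zero] by simp
    qed
    then have "1 \<le> ?y t \<and> ?y t \<le> p"
      using y_t True R_range[OF \<open>t < f\<close>] by simp
    moreover have "partial_carry t0 (Suc m) = ?K"
      using K_Suc K_t True by (metis fun_upd_triv)
    ultimately show ?thesis
      using step y[OF \<open>j < f\<close>] delta_in_range[of ?y t p f J] by simp
  next
    case False
    then have k_t: "k t = ?K t - 1"
      using band[OF \<open>t < f\<close>] K_t by simp
    have "\<not> (1 \<le> ?y t \<and> ?y t \<le> p) \<and> (?y t \<le> 0 \<longleftrightarrow> t \<notin> J)"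
    proof (cases "m = 0")
      case True
      then show ?thesis
        using zero y0_eq_0[OF zero] c_range[OF \<open>t0 < f\<close>] \<open>t0 < f\<close> by (simp add: t_def)
    next
      case False
      then show ?thesis
        using y_t k_t K_t R_range[OF \<open>t < f\<close>] p_ge_2 by (auto simp: jsign_def)
    qed
    then have "delta p f J ?y t j = carry_vec p f J c (?K(t := ?K t - 1)) j"
      using delta_carry_vec[OF \<open>t < f\<close> \<open>j < f\<close> y] by blast
    then show ?thesis
      unfolding step K_Suc k_t .
  qed
qed

lemma r_steps_partial_carry:
  assumes "\<And>i. i < f \<Longrightarrow> base_carry J i - 1 \<le> k i \<and> k i \<le> base_carry J i"
    and "t0 < f" and "y0 p f J c t0 = 0"
  shows "m \<le> f \<Longrightarrow> j < f \<Longrightarrow> r_steps p f J c t0 m j = carry_vec p f J c (partial_carry t0 m) j"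
proof (induction m arbitrary: j)
  case 0
  then show ?case
    by (simp add: y0_eq_carry_vec partial_carry_0)
next
  case (Suc m)
  then show ?case
    using r_steps_Suc_partial_carry[OF assms] by simp
qed

lemma r_steps_eq_in_band:
  assumes "\<And>i. i < f \<Longrightarrow> base_carry J i - 1 \<le> k i \<and> k i \<le> base_carry J i"
    and "t0 < f" and "y0 p f J c t0 = 0" and "i < f"
  shows "r_steps p f J c t0 f i = R i"
  using r_steps_partial_carry[OF assms(1-3) order_refl assms(4)] carry_vec_partial_carry_f[OF assms(4)]
  by simp

lemma carry_base_or_all_below:
  assumes band: "\<And>i. i < f \<Longrightarrow> base_carry J i - 1 \<le> k i \<and> k i \<le> base_carry J i"
    and y0_pos: "\<And>i. i < f \<Longrightarrow> 0 < y0 p f J c i"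
  shows "(\<forall>i<f. k i = base_carry J i) \<or> (\<forall>i<f. k i = base_carry J i - 1)"
proof (cases "\<exists>t<f. k t = base_carry J t")
  case True
  then obtain t where "t < f" and "k t = base_carry J t"
    by blast
  then have "\<forall>i<f. k i = base_carry J i"
  proof (rule cyclic_induct_succ[where P = "\<lambda>i. k i = base_carry J i"])
    fix i assume "i < f" and k_i: "k i = base_carry J i"
    define j where "j = cyc_succ f i"
    have "j < f" and pred_j: "cyc_pred f j = i"
      using cyc_succ_less[OF f_pos] cyc_pred_succ[OF \<open>i < f\<close>] by (simp_all add: j_def)
    show "k (cyc_succ f i) = base_carry J (cyc_succ f i)"
    proof (rule ccontr)
      assume "k (cyc_succ f i) \<noteq> base_carry J (cyc_succ f i)"
      then have k_j: "k j = base_carry J j - 1"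
        using band[OF \<open>j < f\<close>] by (simp add: j_def)
      have "R j = y0 p f J c j - jsign J j * p"
        using R_carry[OF \<open>j < f\<close>] y0_eq_carry_vec[of j f p J c] \<open>j < f\<close>
        by (simp add: carry_vec_def pred_j k_i k_j algebra_simps)
      then show False
        using R_range[OF \<open>j < f\<close>] y0_pos[OF \<open>j < f\<close>] y0_range[of c j p f J] c_range[OF \<open>j < f\<close>]
        by (auto simp: jsign_def split: if_splits)
    qed
  qed
  then show ?thesis
    by blast
next
  case False
  then show ?thesis
    using band by force
qed

lemma all_below_base:
  assumes below: "\<And>i. i < f \<Longrightarrow> k i = base_carry J i - 1"
    and y0_pos: "\<And>i. i < f \<Longrightarrow> 0 < y0 p f J c i"
  shows "(J = {} \<and> (\<forall>i<f. c i = p - 2 \<and> R i = p))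
    \<or> (\<exists>j\<in>J. cyc_pred f j \<notin> J \<and> R j = 1 \<and> R (cyc_pred f j) = p)"
proof -
  have outside: "R i = p \<and> (cyc_pred f i \<notin> J \<longrightarrow> c i = p - 2)" if "i < f" and "i \<notin> J" for i
  proof (cases "cyc_pred f i \<in> J")
    case True
    then have "R i = 2 * p - 1 - c i"
      using R_out[OF that] below[OF that(1)] below[OF pred_less] that(2) by (simp add: base_carry_def)
    then show ?thesis
      using R_range[OF that(1)] c_range[OF that(1)] True by auto
  next
    case False
    then have "R i = 2 * p - 2 - c i"
      using R_out[OF that] below[OF that(1)] below[OF pred_less] that(2) by (simp add: base_carry_def)
    moreover have "0 < p - 1 - c i"
      using y0_pos[OF that(1)] False that(2) by (simp add: y0_def Let_def cyc_pred_def)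
    ultimately show ?thesis
      using R_range[OF that(1)] by auto
  qed
  show ?thesis
  proof (cases "J = {}")
    case True
    then show ?thesis
      using outside by auto
  next
    case False
    then obtain j where "j \<in> J"
      by blast
    then have "j < f"
      using J_sub by auto
    have R_j: "R j = c j - p - k (cyc_pred f j)"
      using R_in[OF \<open>j < f\<close> \<open>j \<in> J\<close>] below[OF \<open>j < f\<close>] \<open>j \<in> J\<close>
      by (simp add: base_carry_def)
    then have "k (cyc_pred f j) \<le> -2"
      using R_range[OF \<open>j < f\<close>] c_range[OF \<open>j < f\<close>] by linarith
    then have pred_out: "cyc_pred f j \<notin> J" and "k (cyc_pred f j) = -2"
      using below[OF pred_less] by (auto simp: base_carry_def split: if_splits)
    then have "R j = 1"
      using R_j R_range[OF \<open>j < f\<close>] c_range[OF \<open>j < f\<close>] by linarith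
    then show ?thesis
      using outside[OF pred_less pred_out] \<open>j \<in> J\<close> pred_out by blast
  qed
qed

lemma r_steps_eq_R_if_not_below:
  assumes not_below: "\<And>i. i < f \<Longrightarrow> base_carry J i - 1 \<le> k i"
    and "t0 < f" and "y0 p f J c t0 = 0" and "i < f"
  shows "r_steps p f J c t0 f i = R i"
proof (rule r_steps_eq_in_band[OF _ assms(2-4)])
  have "t0 \<notin> J"
    using y0_eq_0[OF assms(3)] c_range[OF \<open>t0 < f\<close>] by auto
  then have "\<not> base_carry J j < k j" if "j < f" for j
    using carry_above_base[OF that] \<open>t0 < f\<close> by auto
  then show "base_carry J j - 1 \<le> k j \<and> k j \<le> base_carry J j" if "j < f" for j
    using not_below that by force
qed

lemma R_eq_r_fun_or_exceptional:
  assumes not_below: "\<And>i. i < f \<Longrightarrow> base_carry J i - 1 \<le> k i"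
    and no_transfer: "\<not> (\<exists>j\<in>J. cyc_pred f j \<notin> J \<and> R j = 1 \<and> R (cyc_pred f j) = p)"
  shows "(J = {..<f} \<and> (\<forall>i<f. c i = 1 \<and> R i = p))
    \<or> (J = {} \<and> (\<forall>i<f. c i = p - 2 \<and> R i = p))
    \<or> (\<forall>i<f. R i = r_fun p f J c i)"
proof (cases "\<exists>i<f. base_carry J i < k i")
  case True
  then show ?thesis
    using carry_above_base by blast
next
  case False
  then have band: "base_carry J i - 1 \<le> k i \<and> k i \<le> base_carry J i" if "i < f" for i
    using not_below that by force
  show ?thesis
  proof (cases "\<exists>t0<f. y0 p f J c t0 = 0")
    case True
    let ?t0 = "SOME t0. t0 < f \<and> y0 p f J c t0 = 0"
    have "?t0 < f \<and> y0 p f J c ?t0 = 0"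
      using someI_ex[OF True] .
    moreover have "r_fun p f J c = r_steps p f J c ?t0 f"
      using True by (auto simp: r_fun_def)
    ultimately show ?thesis
      using r_steps_eq_in_band[OF band] by simp
  next
    case False
    then have y0_pos: "0 < y0 p f J c i" if "i < f" for i
      using y0_range[of c i p f J] c_range[OF that] that by force
    then have r_fun_y0: "r_fun p f J c = y0 p f J c"
      by (simp add: r_fun_def)
    show ?thesis
      using carry_base_or_all_below[OF band y0_pos]
    proof
      assume "\<forall>i<f. k i = base_carry J i"
      then have "R i = y0 p f J c i" if "i < f" for i
        using R_carry[OF that] y0_eq_carry_vec[OF that] pred_less that by (simp add: carry_vec_def)
      then show ?thesis
        using r_fun_y0 by simp
    next
      assume "\<forall>i<f. k i = base_carry J i - 1"
      then show ?thesis
        using all_below_base y0_pos no_transfer by blast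
    qed
  qed
qed

end

theorem proposition5p7:
  fixes p :: int and e f :: nat and k1 k2 :: int
    and n a b x c :: "nat \<Rightarrow> int" and J :: "nat set"
  assumes "prime p" and "1 \<le> f" and "1 \<le> e"
    and n_range: "\<forall>i<f. 1 \<le> n i \<and> n i \<le> p" and n_some: "\<exists>i<f. n i < p"
    and chi: "[k1 - k2 = Omega p f n 0] (mod p ^ f - 1)"
    and weakly_generic: "\<forall>i<f. int e \<le> n i \<and> n i \<le> p - int e"
    and serre: "\<forall>i<f. 0 \<le> a i - b i \<and> a i - b i \<le> p - 1"
    and Wexp: "in_Wexp p f e k1 k2 a b"
    and S_ne: "S_set p f e k1 k2 a b \<noteq> {}"
    and Jx_in: "(J, x) \<in> S_set p f e k1 k2 a b"
    and Jx_max: "\<forall>Jx' \<in> S_set p f e k1 k2 a b. preceq p f a b (J, x) Jx' \<longrightarrow> Jx' = (J, x)"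
    and c_def: "c = (\<lambda>i. n i + int e - 1 - 2 * x i)"
  shows "(\<forall>i<f. 1 \<le> c i \<and> c i \<le> p - 1)
    \<and> ((\<forall>i<f. a i - b i + 1 = r_fun p f J c i)
       \<or> (((J = {..<f} \<and> (\<forall>i<f. n i = int e \<and> x i = int e - 1))
           \<or> (J = {} \<and> (\<forall>i<f. n i = p - 1 - int e \<and> x i = 0)))
          \<and> (\<forall>i<f. a i - b i + 1 = p)))
    \<and> (\<forall>t0 t1. t0 < f \<and> t1 < f \<and> y0 p f J c t0 = 0 \<and> y0 p f J c t1 = 0 \<longrightarrow>
         (\<forall>i<f. r_steps p f J c t0 f i = r_steps p f J c t1 f i))"
proof -
  have p: "2 \<le> p" and f: "0 < f"
    using \<open>prime p\<close> \<open>1 \<le> f\<close> by (simp_all add: prime_ge_2_int)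
  from Jx_in have J_sub: "J \<subseteq> {..<f}" and x_range: "\<forall>i<f. 0 \<le> x i \<and> x i \<le> int e - 1"
    by (auto simp: S_set_def x_ok_def)
  have c_range: "\<forall>i<f. 1 \<le> c i \<and> c i \<le> p - 1"
    using x_range weakly_generic by (force simp: c_def)
  obtain k where k: "\<And>i. i < f \<Longrightarrow> a i - b i + 1 = carry_vec p f J c k i"
    using S_set_carry_vec[OF p f Jx_in chi, folded c_def] by blast
  interpret carry_repr p f J c "\<lambda>i. a i - b i + 1" k
  proof
    show "1 \<le> a i - b i + 1 \<and> a i - b i + 1 \<le> p" if "i < f" for i
      using serre that by auto
  qed (use p f J_sub c_range k in auto)
  have not_below: "base_carry J i - 1 \<le> k i" if "i < f" for i
    using carry_below_band[OF that] maximal_S_not_all_two[OF f Jx_in Jx_max] by force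
  have no_transfer: "\<not> (\<exists>j\<in>J. cyc_pred f j \<notin> J \<and> a j - b j + 1 = 1
      \<and> a (cyc_pred f j) - b (cyc_pred f j) + 1 = p)"
    using maximal_S_no_transfer[OF p f Jx_in Jx_max] by blast
  have "c i = 1 \<Longrightarrow> n i = int e \<and> x i = int e - 1"
    and "c i = p - 2 \<Longrightarrow> n i = p - 1 - int e \<and> x i = 0" if "i < f" for i
    using x_range[rule_format, OF that] weakly_generic[rule_format, OF that]
    by (simp_all add: c_def) presburger+
  then show ?thesis
    using R_eq_r_fun_or_exceptional[OF not_below no_transfer]
      r_steps_eq_R_if_not_below[OF not_below] c_range
    by auto
qed

end
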